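(* In the resource theory of unital maps on a $d$-dimensional Hilbert space, with the currency $\mathcal C=\{C^k\}_{k=1}^d\cup\{\Omega\}$, $C^k=\{\Pi^k/k\}$, $\mathrm{Val}(C^k)=\log d-\log k$, $\mathrm{Val}(\Omega)=0$, the cost of any specification $V\in S^\Omega$ is $$\mathrm{Cost}(V)=\inf_{\rho\in V}\log\frac{d}{\lfloor\lambda_{\max}(\rho)^{-1}\rfloor}=\log d-\sup_{\rho\in V}\log\big\lfloor 2^{H_{\min}(\rho)}\big\rfloor.$$
   Context: $\Omega$ is the set of all density operators on a Hilbert space $\mathcal H$ of dimension $d$ with fixed orthonormal basis $\{\ket i\}_{i=1}^d$; $S^\Omega$ is the set of non-empty subsets of $\Omega$; $\Pi^k=\sum_{i=1}^k\ket i\bra i$. Allowed transformations: $f_{\mathcal E}(V)=\{\mathcal E(\rho):\rho\in V\}$ for unital CPTP maps $\mathcal E$; $V\to W$ iff some unital CPTP $\mathcal E$ has $\mathcal E(\rho)\in W$ for all $\rho\in V$. $\mathrm{Cost}(V)=\inf\{\mathrm{Val}(C):C\in\mathcal C,\ C\to V\}$. $\lambda_{\max}(\rho)$ is the largest eigenvalue of $\rho$, $H_{\min}(\rho)=-\log\lambda_{\max}(\rho)$, $\lfloor\cdot\rfloor$ is the floor function, and logarithms are base 2. *)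

theory Defs
  imports Complex_Main "Jordan_Normal_Form.Char_Poly"
begin

(* Matrices over C of size d x d represent operators on C^d with the standard
   basis |i>, i = 0..d-1 (corresponding to |1>,...,|d> in the paper). *)

definition adj :: "complex mat \<Rightarrow> complex mat" where
  "adj A = mat (dim_col A) (dim_row A) (\<lambda>(i,j). cnj (A $$ (j,i)))"

definition mtrace :: "complex mat \<Rightarrow> complex" where
  "mtrace A = (\<Sum>i<dim_row A. A $$ (i,i))"

definition psd :: "nat \<Rightarrow> complex mat \<Rightarrow> bool" where
  "psd d A \<longleftrightarrow> A \<in> carrier_mat d d \<and> adj A = A \<and>
     (\<forall>v \<in> carrier_vec d. 0 \<le> Re ((A *\<^sub>v v) \<bullet>c v))"

definition density :: "nat \<Rightarrow> complex mat \<Rightarrow> bool" where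
  "density d \<rho> \<longleftrightarrow> psd d \<rho> \<and> mtrace \<rho> = 1"

definition Omega :: "nat \<Rightarrow> complex mat set" where
  "Omega d = {\<rho>. density d \<rho>}"

definition msum :: "nat \<Rightarrow> nat \<Rightarrow> (nat \<Rightarrow> complex mat) \<Rightarrow> complex mat" where
  "msum d n f = foldr (\<lambda>i acc. f i + acc) [0..<n] (0\<^sub>m d d)"

(* unital CPTP map on d x d matrices, given by a Kraus representation
   E(\<rho>) = \<Sum> K_i \<rho> K_i^\<dagger>, with \<Sum> K_i^\<dagger> K_i = I (trace preserving)
   and \<Sum> K_i K_i^\<dagger> = I (unital) *)
definition unital_cptp :: "nat \<Rightarrow> (complex mat \<Rightarrow> complex mat) \<Rightarrow> bool" where
  "unital_cptp d E \<longleftrightarrow> (\<exists>(n::nat) (K :: nat \<Rightarrow> complex mat).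
      (\<forall>i<n. K i \<in> carrier_mat d d) \<and>
      msum d n (\<lambda>i. adj (K i) * K i) = 1\<^sub>m d \<and>
      msum d n (\<lambda>i. K i * adj (K i)) = 1\<^sub>m d \<and>
      (\<forall>\<rho> \<in> carrier_mat d d. E \<rho> = msum d n (\<lambda>i. K i * \<rho> * adj (K i))))"

definition converts :: "nat \<Rightarrow> complex mat set \<Rightarrow> complex mat set \<Rightarrow> bool" where
  "converts d V W \<longleftrightarrow> (\<exists>E. unital_cptp d E \<and> (\<forall>\<rho>\<in>V. E \<rho> \<in> W))"

definition Pi_proj :: "nat \<Rightarrow> nat \<Rightarrow> complex mat" where
  "Pi_proj d k = mat d d (\<lambda>(i,j). if i = j \<and> i < k then 1 else 0)"

definition currency :: "nat \<Rightarrow> (complex mat set \<times> real) set" where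
  "currency d = {({(1 / complex_of_nat k) \<cdot>\<^sub>m Pi_proj d k}, log 2 (real d) - log 2 (real k)) | k.
                    1 \<le> k \<and> k \<le> d} \<union> {(Omega d, 0)}"

definition Cost :: "nat \<Rightarrow> complex mat set \<Rightarrow> real" where
  "Cost d V = Inf {v. \<exists>C. (C, v) \<in> currency d \<and> converts d C V}"

(* largest eigenvalue (eigenvalues of density operators are real) *)
definition lambda_max :: "complex mat \<Rightarrow> real" where
  "lambda_max \<rho> = Max {Re l | l. eigenvalue \<rho> l}"

definition Hmin :: "complex mat \<Rightarrow> real" where
  "Hmin \<rho> = - log 2 (lambda_max \<rho>)"

end

theory Submission
  imports Defs
begin

text \<open>Write \<open>N \<rho> = \<lfloor>1 / \<lambda>\<^sub>m\<^sub>a\<^sub>x \<rho>\<rfloor>\<close>. A unital channel maps \<open>\<Pi>\<^sup>k/k\<close> to \<open>\<rho>\<close> iff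
  \<open>\<lambda>\<^sub>m\<^sub>a\<^sub>x \<rho> \<le> 1/k\<close>, i.e. iff \<open>k \<le> N \<rho>\<close>. Necessity: unitality gives
  \<open>E(\<Pi>\<^sup>k/k) \<le> E(1/k) = 1/k\<close> in the Loewner order. Sufficiency: write \<open>\<rho> = U diag(\<lambda>) U\<^sup>*\<close>;
  if every \<open>\<lambda>\<^sub>l \<le> 1/k\<close> there is a doubly stochastic matrix \<open>w\<close> carrying the spectrum of
  \<open>\<Pi>\<^sup>k/k\<close> to \<open>\<lambda>\<close>, and the Kraus operators \<open>\<surd>w\<^sub>i\<^sub>l U |l\<rangle>\<langle>i|\<close> form a unital channel
  performing the conversion. So the cheapest currency reaching \<open>V\<close> is \<open>C\<^sup>k\<close> with \<open>k\<close> the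
  maximum of \<open>N\<close> over \<open>V\<close> (\<open>\<Omega>\<close> is never cheaper than \<open>C\<^sup>d\<close>), and
  \<open>2 powr Hmin \<rho> = 1 / \<lambda>\<^sub>m\<^sub>a\<^sub>x \<rho>\<close> gives the second form. The spectral theorem behind all
  this is proved by Householder deflation.\<close>

section \<open>Adjoints, matrix sums and unitary matrices\<close>

lemma dim_adj [simp]: "dim_row (adj A) = dim_col A" "dim_col (adj A) = dim_row A"
  by (auto simp: adj_def)

lemma adj_carrier [simp]: "A \<in> carrier_mat n m \<Longrightarrow> adj A \<in> carrier_mat m n"
  by (auto simp: adj_def)

lemma index_adj [simp]: "i < dim_col A \<Longrightarrow> j < dim_row A \<Longrightarrow> adj A $$ (i,j) = cnj (A $$ (j,i))"
  by (auto simp: adj_def)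

lemma adj_adj [simp]: "adj (adj A) = A"
  by (rule eq_matI) auto

lemma adj_one [simp]: "adj (1\<^sub>m n) = 1\<^sub>m n"
  by (rule eq_matI) auto

lemma mult_carrier_mat_square [simp]:
  "A \<in> carrier_mat n n \<Longrightarrow> B \<in> carrier_mat n n \<Longrightarrow> A * B \<in> carrier_mat n n"
  by (rule mult_carrier_mat)

lemma index_mult_mat_sum:
  "A \<in> carrier_mat n m \<Longrightarrow> B \<in> carrier_mat m p \<Longrightarrow> i < n \<Longrightarrow> j < p \<Longrightarrow>
   (A * B) $$ (i,j) = (\<Sum>k<m. A $$ (i,k) * B $$ (k,j))"
  by (auto simp: scalar_prod_def atLeast0LessThan)

lemma adj_mult:
  assumes A: "A \<in> carrier_mat n m" and B: "B \<in> carrier_mat m p"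
  shows "adj (A * B) = adj B * adj A"
proof (rule eq_matI)
  fix i j assume "i < dim_row (adj B * adj A)" "j < dim_col (adj B * adj A)"
  then have ij: "i < p" "j < n" using A B by auto
  have "(adj B * adj A) $$ (i, j) = (\<Sum>k<m. adj B $$ (i,k) * adj A $$ (k,j))"
    by (rule index_mult_mat_sum[of _ p m _ n]) (use A B ij in auto)
  also have "\<dots> = (\<Sum>k<m. cnj (A $$ (j,k) * B $$ (k,i)))"
    using A B ij by (auto simp: mult.commute)
  also have "\<dots> = cnj ((A * B) $$ (j,i))"
    by (subst index_mult_mat_sum[OF A B]) (use ij in auto)
  also have "\<dots> = adj (A * B) $$ (i, j)" using A B ij by auto
  finally show "adj (A * B) $$ (i, j) = (adj B * adj A) $$ (i, j)" ..
qed (use A B in auto)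

lemma foldr_add_mat:
  assumes "\<forall>i\<in>set xs. f i \<in> carrier_mat d d" "z \<in> carrier_mat d d"
  shows "foldr (\<lambda>i acc. f i + acc) xs z \<in> carrier_mat d d \<and>
    (\<forall>a<d. \<forall>b<d. foldr (\<lambda>i acc. f i + acc) xs z $$ (a,b) =
                  (\<Sum>i\<leftarrow>xs. f i $$ (a,b)) + z $$ (a,b))"
  using assms by (induction xs) (auto simp: add.assoc)

lemma msum_carrier: "(\<And>i. i < n \<Longrightarrow> f i \<in> carrier_mat d d) \<Longrightarrow> msum d n f \<in> carrier_mat d d"
  unfolding msum_def using foldr_add_mat[of "[0..<n]" f d "0\<^sub>m d d"] by auto

lemma index_msum:
  "(\<And>i. i < n \<Longrightarrow> f i \<in> carrier_mat d d) \<Longrightarrow> a < d \<Longrightarrow> b < d \<Longrightarrow>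
   msum d n f $$ (a,b) = (\<Sum>i<n. f i $$ (a,b))"
  unfolding msum_def using foldr_add_mat[of "[0..<n]" f d "0\<^sub>m d d"]
  by (auto simp: sum_set_upt_conv_sum_list_nat[symmetric] atLeast0LessThan)

definition diagm :: "nat \<Rightarrow> (nat \<Rightarrow> real) \<Rightarrow> complex mat" where
  "diagm n lam = mat n n (\<lambda>(i,j). if i = j then complex_of_real (lam i) else 0)"

definition unitary :: "nat \<Rightarrow> complex mat \<Rightarrow> bool" where
  "unitary n U \<longleftrightarrow> U \<in> carrier_mat n n \<and> adj U * U = 1\<^sub>m n \<and> U * adj U = 1\<^sub>m n"

lemma diagm_carrier [simp]: "diagm n lam \<in> carrier_mat n n"
  by (simp add: diagm_def)

lemma dim_diagm [simp]: "dim_row (diagm n lam) = n" "dim_col (diagm n lam) = n"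
  by (simp_all add: diagm_def)

lemma diagm_one: "diagm n (\<lambda>_. 1) = 1\<^sub>m n"
  by (rule eq_matI) (auto simp: diagm_def)

lemma unitary_carrier: "unitary n U \<Longrightarrow> U \<in> carrier_mat n n"
  by (simp add: unitary_def)

lemma index_conj_diagm:
  assumes U: "U \<in> carrier_mat n n" and a: "a < n" and b: "b < n"
  shows "(U * diagm n lam * adj U) $$ (a,b) =
    (\<Sum>k<n. U $$ (a,k) * complex_of_real (lam k) * cnj (U $$ (b,k)))"
proof -
  have UD: "(U * diagm n lam) $$ (a,k) = U $$ (a,k) * complex_of_real (lam k)" if k: "k < n" for k
  proof -
    have "(U * diagm n lam) $$ (a,k) = (\<Sum>j<n. U $$ (a,j) * diagm n lam $$ (j,k))"
      by (rule index_mult_mat_sum[OF U diagm_carrier a k])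
    also have "\<dots> = (\<Sum>j<n. if j = k then U $$ (a,j) * complex_of_real (lam j) else 0)"
      by (rule sum.cong) (auto simp: diagm_def k)
    finally show ?thesis using k by simp
  qed
  show ?thesis
    by (subst index_mult_mat_sum[of _ n n _ n]) (use U a b UD in \<open>auto intro!: sum.cong\<close>)
qed

lemma index_adj_mult_self:
  "U \<in> carrier_mat n n \<Longrightarrow> a < n \<Longrightarrow> b < n \<Longrightarrow>
   (adj U * U) $$ (a,b) = (\<Sum>k<n. cnj (U $$ (k,a)) * U $$ (k,b))"
  by (subst index_mult_mat_sum[of _ n n _ n]) auto

lemma unitary_col_norm:
  assumes U: "unitary n U" and l: "l < n"
  shows "(\<Sum>a<n. (cmod (col U l $ a))\<^sup>2) = 1"
proof -
  have Uc: "U \<in> carrier_mat n n" and UU: "adj U * U = 1\<^sub>m n" using U unfolding unitary_def by auto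
  have "complex_of_real (\<Sum>a<n. (cmod (col U l $ a))\<^sup>2) = (\<Sum>a<n. cnj (U $$ (a,l)) * U $$ (a,l))"
    unfolding of_real_sum
  proof (rule sum.cong)
    fix a assume "a \<in> {..<n}"
    then have "col U l $ a = U $$ (a,l)" using Uc l by auto
    then show "complex_of_real ((cmod (col U l $ a))\<^sup>2) = cnj (U $$ (a,l)) * U $$ (a,l)"
      by (metis complex_norm_square mult.commute)
  qed simp
  also have "\<dots> = (adj U * U) $$ (l,l)" by (rule index_adj_mult_self[OF Uc l l, symmetric])
  also have "\<dots> = 1" using UU l by auto
  finally show ?thesis by (metis of_real_eq_1_iff)
qed

lemma unitary_mult:
  assumes "unitary n A" "unitary n B"
  shows "unitary n (A * B)"
proof -
  have A: "A \<in> carrier_mat n n" "adj A * A = 1\<^sub>m n" "A * adj A = 1\<^sub>m n"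
    and B: "B \<in> carrier_mat n n" "adj B * B = 1\<^sub>m n" "B * adj B = 1\<^sub>m n"
    using assms unfolding unitary_def by auto
  have adjAB: "adj (A * B) = adj B * adj A" by (rule adj_mult[OF A(1) B(1)])
  have e1: "adj A * (A * B) = B"
    using A B by (simp flip: assoc_mult_mat[of "adj A" n n A n B n])
  have "adj B * adj A * (A * B) = adj B * (adj A * (A * B))"
    using A B by (simp add: assoc_mult_mat[of _ n n _ n _ n])
  also have "\<dots> = 1\<^sub>m n" using A B e1 by simp
  finally have 1: "adj (A * B) * (A * B) = 1\<^sub>m n" unfolding adjAB .
  have e2: "B * (adj B * adj A) = adj A"
    using A B by (simp flip: assoc_mult_mat[of B n n "adj B" n "adj A" n])
  have C: "adj B * adj A \<in> carrier_mat n n" using A B by (auto intro!: mult_carrier_mat)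
  have "A * B * (adj B * adj A) = A * (B * (adj B * adj A))"
    by (rule assoc_mult_mat[OF A(1) B(1) C])
  also have "\<dots> = 1\<^sub>m n" using A B e2 by simp
  finally have 2: "A * B * adj (A * B) = 1\<^sub>m n" unfolding adjAB .
  show ?thesis using 1 2 A B unfolding unitary_def by auto
qed

section \<open>Unitary diagonalisation of Hermitian matrices\<close>

definition one_block_mat :: "nat \<Rightarrow> complex mat \<Rightarrow> complex mat" where
  "one_block_mat m B = mat (Suc m) (Suc m)
     (\<lambda>(a,b). if a = 0 \<and> b = 0 then 1 else if a = 0 \<or> b = 0 then 0 else B $$ (a-1,b-1))"

lemma one_block_mat_carrier [simp]: "one_block_mat m B \<in> carrier_mat (Suc m) (Suc m)"
  by (simp add: one_block_mat_def)

lemma dim_one_block_mat [simp]: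
  "dim_row (one_block_mat m B) = Suc m" "dim_col (one_block_mat m B) = Suc m"
  by (simp_all add: one_block_mat_def)

lemma index_one_block_mat [simp]:
  "one_block_mat m B $$ (0,0) = 1"
  "b < m \<Longrightarrow> one_block_mat m B $$ (0,Suc b) = 0"
  "a < m \<Longrightarrow> one_block_mat m B $$ (Suc a,0) = 0"
  "a < m \<Longrightarrow> b < m \<Longrightarrow> one_block_mat m B $$ (Suc a,Suc b) = B $$ (a,b)"
  by (auto simp: one_block_mat_def)

lemma index_one_block_mat_row0: "b < Suc m \<Longrightarrow> one_block_mat m B $$ (0,b) = (if b = 0 then 1 else 0)"
  and index_one_block_mat_col0: "a < Suc m \<Longrightarrow> one_block_mat m B $$ (a,0) = (if a = 0 then 1 else 0)"
  by (auto simp: one_block_mat_def)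

lemma one_block_mat_adj_mult_self:
  assumes B: "B \<in> carrier_mat m m" "adj B * B = 1\<^sub>m m"
  shows "adj (one_block_mat m B) * one_block_mat m B = 1\<^sub>m (Suc m)"
proof (rule eq_matI)
  let ?E = "one_block_mat m B"
  note index_one_block_mat_row0 [simp] index_one_block_mat_col0 [simp]
  fix a b assume "a < dim_row (1\<^sub>m (Suc m))" "b < dim_col (1\<^sub>m (Suc m))"
  then have ab: "a < Suc m" "b < Suc m" by auto
  have split: "(adj ?E * ?E) $$ (a, b) =
      cnj (?E $$ (0,a)) * ?E $$ (0,b) + (\<Sum>k<m. cnj (?E $$ (Suc k,a)) * ?E $$ (Suc k,b))"
    by (subst index_adj_mult_self[OF one_block_mat_carrier ab]) (rule sum.lessThan_Suc_shift)
  show "(adj ?E * ?E) $$ (a, b) = 1\<^sub>m (Suc m) $$ (a, b)"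
  proof (cases a)
    case 0
    then show ?thesis unfolding split using ab by simp
  next
    case (Suc a')
    show ?thesis
    proof (cases b)
      case 0
      then show ?thesis unfolding split using ab Suc by simp
    next
      case (Suc b')
      have "(\<Sum>k<m. cnj (B $$ (k,a')) * B $$ (k,b')) = (adj B * B) $$ (a',b')"
        using ab \<open>a = Suc a'\<close> Suc by (subst index_adj_mult_self[OF B(1)]) auto
      then show ?thesis unfolding split using ab \<open>a = Suc a'\<close> Suc B by simp
    qed
  qed
qed auto

lemma adj_one_block_mat: "B \<in> carrier_mat m m \<Longrightarrow> adj (one_block_mat m B) = one_block_mat m (adj B)"
  by (rule eq_matI) (auto simp: one_block_mat_def)

lemma one_block_mat_unitary:
  assumes "unitary m B"
  shows "unitary (Suc m) (one_block_mat m B)"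
proof -
  have B: "B \<in> carrier_mat m m" "adj B * B = 1\<^sub>m m" "adj (adj B) * adj B = 1\<^sub>m m"
    using assms unfolding unitary_def by auto
  have "one_block_mat m B * adj (one_block_mat m B) =
      adj (one_block_mat m (adj B)) * one_block_mat m (adj B)"
    using B by (simp add: adj_one_block_mat)
  also have "\<dots> = 1\<^sub>m (Suc m)" using B by (intro one_block_mat_adj_mult_self) auto
  finally show ?thesis using one_block_mat_adj_mult_self[OF B(1,2)] unfolding unitary_def by simp
qed

lemma eigenvector_exists:
  fixes A :: "complex mat"
  assumes A: "A \<in> carrier_mat (Suc m) (Suc m)"
  shows "\<exists>e v. v \<in> carrier_vec (Suc m) \<and> v \<noteq> 0\<^sub>v (Suc m) \<and> A *\<^sub>v v = e \<cdot>\<^sub>v v"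
proof -
  obtain as where as: "char_poly A = (\<Prod>a\<leftarrow>as. [:- a, 1:])" "length as = Suc m"
    using char_poly_factorized[OF A] by blast
  then obtain a as' where "as = a # as'" by (cases as) auto
  then have "poly (char_poly A) a = 0" unfolding as(1) by simp
  then have "eigenvalue A a" using eigenvalue_root_char_poly[OF A] by simp
  then obtain v where "eigenvector A v a" unfolding eigenvalue_def by blast
  then show ?thesis unfolding eigenvector_def using A by auto
qed

lemma sum_cmod_square_pos:
  fixes f :: "nat \<Rightarrow> complex"
  assumes "k0 < n" "f k0 \<noteq> 0"
  shows "0 < (\<Sum>k<n. (cmod (f k))\<^sup>2)"
proof -
  have "0 < (cmod (f k0))\<^sup>2" using assms by simp
  also have "\<dots> \<le> (\<Sum>k<n. (cmod (f k))\<^sup>2)" using assms by (intro member_le_sum) auto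
  finally show ?thesis .
qed

lemma unit_phase_real: "\<exists>ph. cmod ph = 1 \<and> ph * z = complex_of_real (cmod z)"
proof (cases "z = 0")
  case False
  have "cnj z * z = complex_of_real ((cmod z)\<^sup>2)" by (metis complex_norm_square mult.commute)
  then have "cnj z / complex_of_real (cmod z) * z = complex_of_real (cmod z)"
    using False by (simp add: power2_eq_square)
  then show ?thesis
    using False by (intro exI[of _ "cnj z / complex_of_real (cmod z)"]) (simp add: norm_divide)
qed (intro exI[of _ 1], simp)

lemma normalized_eigenvector_exists:
  assumes A: "A \<in> carrier_mat n n"
    and v: "v \<in> carrier_vec n" "v \<noteq> 0\<^sub>v n" "A *\<^sub>v v = e \<cdot>\<^sub>v v"
  obtains u r where "u \<in> carrier_vec n" "A *\<^sub>v u = e \<cdot>\<^sub>v u"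
    "(\<Sum>k<n. (cmod (u$k))\<^sup>2) = 1" "u$0 = complex_of_real r"
proof -
  define s where "s = (\<Sum>k<n. (cmod (v$k))\<^sup>2)"
  obtain k0 where k0: "k0 < n" "v$k0 \<noteq> 0"
    using v(1,2) by (metis eq_vecI index_zero_vec carrier_vecD)
  then have spos: "0 < s" unfolding s_def by (rule sum_cmod_square_pos)
  obtain ph where ph: "cmod ph = 1" "ph * v$0 = complex_of_real (cmod (v$0))"
    using unit_phase_real by blast
  define t where "t = ph / complex_of_real (sqrt s)"
  define u where "u = t \<cdot>\<^sub>v v"
  have u: "u \<in> carrier_vec n" unfolding u_def using v by simp
  have "A *\<^sub>v u = t \<cdot>\<^sub>v (e \<cdot>\<^sub>v v)" unfolding u_def mult_mat_vec[OF A v(1)] v(3) ..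
  also have "\<dots> = e \<cdot>\<^sub>v u" unfolding u_def by (rule eq_vecI) (auto simp: ac_simps)
  finally have Au: "A *\<^sub>v u = e \<cdot>\<^sub>v u" .
  have "(\<Sum>k<n. (cmod (u$k))\<^sup>2) = (\<Sum>k<n. (cmod t)\<^sup>2 * (cmod (v$k))\<^sup>2)"
    by (rule sum.cong) (use v in \<open>auto simp: u_def norm_mult power_mult_distrib\<close>)
  also have "\<dots> = (cmod t)\<^sup>2 * s" unfolding s_def by (simp add: sum_distrib_left)
  also have "\<dots> = 1" using spos ph(1) by (simp add: t_def norm_divide power_divide)
  finally have nu: "(\<Sum>k<n. (cmod (u$k))\<^sup>2) = 1" .
  have "u$0 = complex_of_real (cmod (v$0) / sqrt s)"
    using k0 v ph(2) unfolding u_def t_def by simp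
  then show ?thesis using that u Au nu by blast
qed

definition householder_mat :: "nat \<Rightarrow> complex \<Rightarrow> (nat \<Rightarrow> complex) \<Rightarrow> complex mat" where
  "householder_mat n c w = mat n n (\<lambda>(a,b). (if a = b then 1 else 0) - c * w a * cnj (w b))"

lemma householder_mat_carrier [simp]: "householder_mat n c w \<in> carrier_mat n n"
  by (simp add: householder_mat_def)

lemma adj_householder_mat: "cnj c = c \<Longrightarrow> adj (householder_mat n c w) = householder_mat n c w"
  by (rule eq_matI) (auto simp: householder_mat_def)

text \<open>\<open>(1 - c w w\<^sup>*)\<^sup>2 = 1 - (2 c - c\<^sup>2 |w|\<^sup>2) w w\<^sup>*\<close>.\<close>

lemma householder_mat_square:
  assumes c: "c * c * (\<Sum>k<n. cnj (w k) * w k) = 2 * c"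
  shows "householder_mat n c w * householder_mat n c w = 1\<^sub>m n"
proof (rule eq_matI)
  let ?H = "householder_mat n c w" and ?S = "\<Sum>k<n. cnj (w k) * w k"
  fix a b assume "a < dim_row (1\<^sub>m n)" "b < dim_col (1\<^sub>m n)"
  then have ab: "a < n" "b < n" by auto
  have "(?H * ?H) $$ (a,b) = (\<Sum>k<n. ((if a = k then 1 else 0) - c * w a * cnj (w k)) *
                                      ((if k = b then 1 else 0) - c * w k * cnj (w b)))"
    by (subst index_mult_mat_sum[of _ n n _ n]) (auto simp: householder_mat_def ab intro!: sum.cong)
  also have "\<dots> = (\<Sum>k<n. (if a = k then 1 else 0) * ((if k = b then 1 else 0) - c * w k * cnj (w b)))
       - (\<Sum>k<n. (c * w a * cnj (w k)) * (if k = b then 1 else 0))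
       + c * c * w a * cnj (w b) * ?S"
    by (simp add: algebra_simps sum_subtractf sum.distrib sum_distrib_left)
  also have "\<dots> = (if a = b then 1 else 0) - 2 * c * w a * cnj (w b) + 2 * c * w a * cnj (w b)"
  proof -
    have "c * c * w a * cnj (w b) * ?S = (c * c * ?S) * (w a * cnj (w b))" by (simp only: ac_simps)
    also have "\<dots> = 2 * c * w a * cnj (w b)" unfolding c by (simp only: ac_simps)
    finally show ?thesis using ab by (simp add: of_bool_def[symmetric])
  qed
  also have "\<dots> = 1\<^sub>m n $$ (a,b)" using ab by simp
  finally show "(?H * ?H) $$ (a,b) = 1\<^sub>m n $$ (a,b)" .
qed (auto simp: householder_mat_def)

text \<open>The reflection in the hyperplane orthogonal to \<open>u - e\<^sub>0\<close> maps \<open>e\<^sub>0\<close> to \<open>u\<close>;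
  it is Hermitian because \<open>\<langle>u, e\<^sub>0\<rangle>\<close> is real.\<close>

lemma householder_reflection_exists:
  fixes u :: "complex vec" and r :: real
  assumes u: "u \<in> carrier_vec n" and n: "0 < n" and nu: "(\<Sum>k<n. (cmod (u$k))\<^sup>2) = 1"
    and u0: "u$0 = of_real r"
  shows "\<exists>H. H \<in> carrier_mat n n \<and> adj H = H \<and> H * H = 1\<^sub>m n \<and> (\<forall>a<n. H $$ (a,0) = u$a)"
proof (cases "\<forall>k<n. u$k = (if k = 0 then 1 else 0)")
  case True
  then show ?thesis by (intro exI[of _ "1\<^sub>m n"]) auto
next
  case False
  define w where "w k = u$k - (if k = 0 then 1 else 0)" for k
  obtain n' where n': "n = Suc n'" using n by (cases n) auto
  define N where "N = (\<Sum>k<n. (cmod (w k))\<^sup>2)"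
  have "N = (cmod (complex_of_real (r - 1)))\<^sup>2 + (\<Sum>k<n'. (cmod (u $ Suc k))\<^sup>2)"
    unfolding N_def n' sum.lessThan_Suc_shift by (simp add: w_def u0)
  also have "(\<Sum>k<n'. (cmod (u $ Suc k))\<^sup>2) = 1 - r\<^sup>2"
    using nu unfolding n' sum.lessThan_Suc_shift u0 by simp
  finally have N: "N = 2 - 2 * r"
    by (simp only: norm_of_real power2_abs) (simp add: power2_eq_square algebra_simps)
  have Npos: "0 < N"
    using False unfolding N_def w_def by (auto intro: sum_cmod_square_pos)
  define c where "c = complex_of_real (2 / N)"
  have Nsum: "(\<Sum>k<n. cnj (w k) * w k) = complex_of_real N"
    unfolding N_def of_real_sum by (rule sum.cong) (simp, metis complex_norm_square mult.commute)
  have "c * c * (\<Sum>k<n. cnj (w k) * w k) = 2 * c"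
    unfolding Nsum c_def using Npos by (simp flip: of_real_mult) (simp add: field_simps)
  moreover have "householder_mat n c w $$ (a,0) = u$a" if a: "a < n" for a
  proof -
    have "householder_mat n c w $$ (a,0) = (if a = 0 then 1 else 0) - w a * (c * cnj (w 0))"
      using a n by (simp add: householder_mat_def ac_simps)
    also have "cnj (w 0) = complex_of_real (r - 1)" unfolding w_def u0 by simp
    also have "c * complex_of_real (r - 1) = -1" unfolding c_def N using Npos N
      by (simp flip: of_real_mult) (simp add: field_simps)
    finally have "householder_mat n c w $$ (a,0) = (if a = 0 then 1 else 0) + w a" by simp
    then show ?thesis by (simp add: w_def)
  qed
  ultimately show ?thesis
    by (intro exI[of _ "householder_mat n c w"])
      (auto simp: adj_householder_mat c_def householder_mat_square)
qed

lemma householder_deflation: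
  fixes A :: "complex mat"
  assumes A: "A \<in> carrier_mat (Suc m) (Suc m)"
  obtains H e where "H \<in> carrier_mat (Suc m) (Suc m)" "adj H = H" "H * H = 1\<^sub>m (Suc m)"
    "\<And>a. a < Suc m \<Longrightarrow> (H * A * H) $$ (a,0) = (if a = 0 then e else 0)"
proof -
  define n where "n = Suc m"
  have A: "A \<in> carrier_mat n n" and n0: "0 < n" using A n_def by auto
  obtain e v where v: "v \<in> carrier_vec n" "v \<noteq> 0\<^sub>v n" "A *\<^sub>v v = e \<cdot>\<^sub>v v"
    using eigenvector_exists[OF assms] n_def by blast
  obtain u r where u: "u \<in> carrier_vec n" "A *\<^sub>v u = e \<cdot>\<^sub>v u" "(\<Sum>k<n. (cmod (u$k))\<^sup>2) = 1"
    "u$0 = complex_of_real r"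
    using normalized_eigenvector_exists[OF A v] .
  obtain H where H: "H \<in> carrier_mat n n" "adj H = H" "H * H = 1\<^sub>m n" "\<forall>a<n. H $$ (a,0) = u$a"
    using householder_reflection_exists[OF u(1) n0 u(3) u(4)] by blast
  have He0: "H *\<^sub>v unit_vec n 0 = u"
    by (rule eq_vecI) (use H u n0 in auto)
  have "(H * A * H) *\<^sub>v unit_vec n 0 = H *\<^sub>v (A *\<^sub>v (H *\<^sub>v unit_vec n 0))"
    using H A by (simp add: assoc_mult_mat_vec[of _ n n _ n])
  also have "\<dots> = e \<cdot>\<^sub>v (H *\<^sub>v u)" unfolding He0 u(2) using H u by (simp add: mult_mat_vec)
  also have "H *\<^sub>v u = unit_vec n 0"
    unfolding He0[symmetric] using H by (simp flip: assoc_mult_mat_vec[OF H(1) H(1)])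
  finally have e0: "(H * A * H) *\<^sub>v unit_vec n 0 = e \<cdot>\<^sub>v unit_vec n 0" .
  have "(H * A * H) $$ (a,0) = (if a = 0 then e else 0)" if a: "a < n" for a
    using arg_cong[OF e0, of "\<lambda>x. x $ a"] H A a n0 by simp
  then show ?thesis using that H n_def by blast
qed

text \<open>Hermiticity forces the first row to vanish off the corner as well, and the corner entry
  to be real.\<close>

lemma hermitian_first_column_diagonalisation:
  assumes A: "A \<in> carrier_mat (Suc m) (Suc m)" "adj A = A"
    and col0: "\<And>a. a < Suc m \<Longrightarrow> A $$ (a,0) = (if a = 0 then e else 0)"
    and U3: "unitary m U3"
    and A3: "mat m m (\<lambda>(a,b). A $$ (Suc a, Suc b)) = U3 * diagm m lam3 * adj U3"
  shows "A = one_block_mat m U3 * diagm (Suc m) (\<lambda>k. if k = 0 then Re e else lam3 (k - 1))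
             * adj (one_block_mat m U3)"
    (is "A = ?U * diagm (Suc m) ?lam * adj ?U")
proof -
  have U3c: "U3 \<in> carrier_mat m m" using U3 unitary_carrier by blast
  have row0: "A $$ (0,b) = (if b = 0 then cnj e else 0)" if b: "b < Suc m" for b
  proof -
    have "A $$ (0,b) = adj A $$ (0,b)" using A(2) by simp
    also have "\<dots> = cnj (A $$ (b,0))" using A(1) b by simp
    finally show ?thesis using col0[OF b] by simp
  qed
  have "e = cnj e" using col0[of 0] row0[of 0] by simp
  then have er: "e = complex_of_real (Re e)" "cnj e = complex_of_real (Re e)"
    by (metis Reals_cnj_iff complex_is_Real_iff of_real_Re)+
  show ?thesis
  proof (rule eq_matI)
    fix a b
    assume "a < dim_row (?U * diagm (Suc m) ?lam * adj ?U)"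
      and "b < dim_col (?U * diagm (Suc m) ?lam * adj ?U)"
    then have ab: "a < Suc m" "b < Suc m" by auto
    have R: "(?U * diagm (Suc m) ?lam * adj ?U) $$ (a,b) =
       ?U $$ (a,0) * complex_of_real (?lam 0) * cnj (?U $$ (b,0)) +
       (\<Sum>k<m. ?U $$ (a,Suc k) * complex_of_real (?lam (Suc k)) * cnj (?U $$ (b,Suc k)))"
      using ab by (subst index_conj_diagm[OF one_block_mat_carrier])
        (simp_all del: sum.lessThan_Suc add: sum.lessThan_Suc_shift)
    show "A $$ (a,b) = (?U * diagm (Suc m) ?lam * adj ?U) $$ (a,b)"
    proof (cases a)
      case 0
      then show ?thesis unfolding R using ab row0[of b] er
        by (simp add: index_one_block_mat_row0 index_one_block_mat_col0)
    next
      case (Suc a')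
      show ?thesis
      proof (cases b)
        case 0
        then show ?thesis unfolding R using ab col0[of a] er Suc
          by (simp add: index_one_block_mat_row0 index_one_block_mat_col0)
      next
        case (Suc b')
        have "A $$ (a,b) = mat m m (\<lambda>(a,b). A $$ (Suc a, Suc b)) $$ (a',b')"
          using ab Suc \<open>a = Suc a'\<close> by simp
        also have "\<dots> = (\<Sum>k<m. U3 $$ (a',k) * complex_of_real (lam3 k) * cnj (U3 $$ (b',k)))"
          using ab Suc \<open>a = Suc a'\<close> by (subst A3, subst index_conj_diagm[OF U3c]) auto
        finally show ?thesis unfolding R using ab Suc \<open>a = Suc a'\<close> by simp
      qed
    qed
  qed (use A in auto)
qed

lemma unitary_conj_involution:
  assumes H: "H \<in> carrier_mat n n" "adj H = H" "H * H = 1\<^sub>m n"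
    and A: "A \<in> carrier_mat n n" and U: "unitary n U"
    and HAH: "H * A * H = U * diagm n lam * adj U"
  shows "unitary n (H * U) \<and> A = (H * U) * diagm n lam * adj (H * U)"
proof -
  have Uc: "U \<in> carrier_mat n n" using U unitary_carrier by blast
  have "unitary n H" using H unfolding unitary_def by auto
  then have HU: "unitary n (H * U)" using U by (rule unitary_mult)
  have "(H * U) * diagm n lam * adj (H * U) = H * (U * diagm n lam * adj U) * H"
    using H Uc by (simp add: adj_mult[OF H(1) Uc] assoc_mult_mat[of _ n n _ n _ n])
  also have "\<dots> = (H * H) * A * (H * H)"
    unfolding HAH[symmetric] using H(1) A by (simp add: assoc_mult_mat[of _ n n _ n _ n])
  also have "\<dots> = A" using H A by simp
  finally show ?thesis using HU by simp
qed

lemma adj_conj_hermitian: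
  assumes "H \<in> carrier_mat n n" "adj H = H" "A \<in> carrier_mat n n" "adj A = A"
  shows "adj (H * A * H) = H * A * H"
  using assms by (simp add: adj_mult[of _ n n _ n] assoc_mult_mat[of _ n n _ n _ n])

lemma adj_lower_block:
  assumes A: "A \<in> carrier_mat (Suc m) (Suc m)" and hA: "adj A = A"
  shows "adj (mat m m (\<lambda>(a,b). A $$ (Suc a, Suc b))) = mat m m (\<lambda>(a,b). A $$ (Suc a, Suc b))"
proof (rule eq_matI)
  let ?B = "mat m m (\<lambda>(a,b). A $$ (Suc a, Suc b))"
  fix a b assume "a < dim_row ?B" "b < dim_col ?B"
  then have ab: "a < m" "b < m" by auto
  have "adj A $$ (Suc a, Suc b) = cnj (A $$ (Suc b, Suc a))" using ab A by simp
  then show "adj ?B $$ (a,b) = ?B $$ (a,b)" using ab hA by simp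
qed auto

theorem hermitian_unitary_diagonalisation:
  fixes A :: "complex mat"
  assumes "A \<in> carrier_mat n n" "adj A = A"
  shows "\<exists>U lam. unitary n U \<and> A = U * diagm n lam * adj U"
  using assms
proof (induction n arbitrary: A)
  case 0
  have "A = 1\<^sub>m 0 * diagm 0 (\<lambda>_. 0) * adj (1\<^sub>m 0)" by (rule eq_matI) (use 0 in auto)
  moreover have "unitary 0 (1\<^sub>m 0)" by (simp add: unitary_def)
  ultimately show ?case by blast
next
  case (Suc m)
  obtain H e where H: "H \<in> carrier_mat (Suc m) (Suc m)" "adj H = H" "H * H = 1\<^sub>m (Suc m)"
    and col0: "\<And>a. a < Suc m \<Longrightarrow> (H * A * H) $$ (a,0) = (if a = 0 then e else 0)"
    using householder_deflation[OF Suc.prems(1)] by blast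
  define A' where "A' = H * A * H"
  have A': "A' \<in> carrier_mat (Suc m) (Suc m)" unfolding A'_def using H Suc.prems by auto
  have hA': "adj A' = A'" unfolding A'_def by (rule adj_conj_hermitian[OF H(1,2) Suc.prems])
  define A3 where "A3 = mat m m (\<lambda>(a,b). A' $$ (Suc a, Suc b))"
  have A3: "A3 \<in> carrier_mat m m" "adj A3 = A3"
    unfolding A3_def using adj_lower_block[OF A' hA'] by auto
  obtain U3 lam3 where U3: "unitary m U3" "A3 = U3 * diagm m lam3 * adj U3"
    using Suc.IH[OF A3] by blast
  have "A' = one_block_mat m U3 * diagm (Suc m) (\<lambda>k. if k = 0 then Re e else lam3 (k - 1))
             * adj (one_block_mat m U3)"
    using hermitian_first_column_diagonalisation[OF A' hA' col0[folded A'_def] U3(1)] U3(2)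
    unfolding A3_def by blast
  then show ?case
    using unitary_conj_involution[OF H Suc.prems(1) one_block_mat_unitary[OF U3(1)]]
    unfolding A'_def by blast
qed

section \<open>Spectra of density operators\<close>

definition quad_form :: "nat \<Rightarrow> complex mat \<Rightarrow> complex vec \<Rightarrow> complex" where
  "quad_form d M x = (\<Sum>a<d. \<Sum>b<d. M $$ (a,b) * x$b * cnj (x$a))"

lemma quad_form_eq:
  assumes "M \<in> carrier_mat d d" "x \<in> carrier_vec d"
  shows "(M *\<^sub>v x) \<bullet>c x = quad_form d M x"
  using assms by (simp add: quad_form_def scalar_prod_def atLeast0LessThan sum_distrib_right)

lemma quad_form_msum:
  assumes "\<And>i. i < n \<Longrightarrow> f i \<in> carrier_mat d d"
  shows "quad_form d (msum d n f) x = (\<Sum>i<n. quad_form d (f i) x)"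
proof -
  have "quad_form d (msum d n f) x = (\<Sum>a<d. \<Sum>b<d. \<Sum>i<n. f i $$ (a,b) * x$b * cnj (x$a))"
    unfolding quad_form_def by (rule sum.cong, simp, rule sum.cong, simp,
        simp add: index_msum[OF assms] sum_distrib_right)
  also have "\<dots> = (\<Sum>i<n. quad_form d (f i) x)"
    unfolding quad_form_def by (subst sum.swap, subst (2) sum.swap, simp)
  finally show ?thesis .
qed

definition col_inner :: "nat \<Rightarrow> complex mat \<Rightarrow> complex vec \<Rightarrow> nat \<Rightarrow> complex" where
  "col_inner d K x j = (\<Sum>a<d. K $$ (a,j) * cnj (x$a))"

lemma quad_form_conj_diagm:
  assumes K: "K \<in> carrier_mat d d"
  shows "quad_form d (K * diagm d q * adj K) x =
    complex_of_real (\<Sum>j<d. q j * (cmod (col_inner d K x j))\<^sup>2)"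
proof -
  have "quad_form d (K * diagm d q * adj K) x =
      (\<Sum>a<d. \<Sum>b<d. \<Sum>j<d. K $$ (a,j) * complex_of_real (q j) * cnj (K $$ (b,j)) * x$b * cnj (x$a))"
    unfolding quad_form_def by (rule sum.cong, simp, rule sum.cong, simp,
        simp add: index_conj_diagm[OF K] sum_distrib_right)
  also have "\<dots> = (\<Sum>j<d. \<Sum>a<d. \<Sum>b<d.
      complex_of_real (q j) * (K $$ (a,j) * cnj (x$a)) * (cnj (K $$ (b,j)) * x$b))"
    by (subst sum.swap, subst (2) sum.swap, rule sum.cong, simp, simp add: ac_simps)
  also have "\<dots> = (\<Sum>j<d. complex_of_real (q j) * (col_inner d K x j * cnj (col_inner d K x j)))"
    unfolding col_inner_def by (simp add: sum_distrib_left sum_distrib_right ac_simps)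
  also have "\<dots> = complex_of_real (\<Sum>j<d. q j * (cmod (col_inner d K x j))\<^sup>2)"
    unfolding of_real_sum by (rule sum.cong, simp, metis complex_norm_square of_real_mult)
  finally show ?thesis .
qed

lemma quad_form_one: "quad_form d (1\<^sub>m d) x = complex_of_real (\<Sum>a<d. (cmod (x$a))\<^sup>2)"
proof -
  have "quad_form d (1\<^sub>m d) x = (\<Sum>a<d. \<Sum>b<d. if b = a then x$a * cnj (x$a) else 0)"
    unfolding quad_form_def by (rule sum.cong, simp, rule sum.cong, auto)
  also have "\<dots> = (\<Sum>a<d. x$a * cnj (x$a))" by simp
  also have "\<dots> = complex_of_real (\<Sum>a<d. (cmod (x$a))\<^sup>2)"
    unfolding of_real_sum by (rule sum.cong, simp, metis complex_norm_square)
  finally show ?thesis .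
qed

lemma col_inner_unitary_col:
  assumes U: "unitary d U" and l: "l < d" and j: "j < d"
  shows "col_inner d U (col U l) j = (if j = l then 1 else 0)"
proof -
  have Uc: "U \<in> carrier_mat d d" and UU: "adj U * U = 1\<^sub>m d" using U unfolding unitary_def by auto
  have "col_inner d U (col U l) j = (\<Sum>k<d. cnj (U $$ (k,l)) * U $$ (k,j))"
    unfolding col_inner_def by (rule sum.cong, use Uc l in auto)
  also have "\<dots> = (adj U * U) $$ (l,j)" by (rule index_adj_mult_self[OF Uc l j, symmetric])
  also have "\<dots> = (if j = l then 1 else 0)" using UU l j by auto
  finally show ?thesis .
qed

lemma quad_form_unitary_col:
  assumes U: "unitary d U" and l: "l < d"
  shows "quad_form d (U * diagm d lam * adj U) (col U l) = complex_of_real (lam l)"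
proof -
  have Uc: "U \<in> carrier_mat d d" using U unfolding unitary_def by auto
  have "(\<Sum>j<d. lam j * (cmod (col_inner d U (col U l) j))\<^sup>2) = (\<Sum>j<d. if j = l then lam j else 0)"
    by (rule sum.cong, auto simp: col_inner_unitary_col[OF U l])
  also have "\<dots> = lam l" using l by simp
  finally show ?thesis by (simp add: quad_form_conj_diagm[OF Uc])
qed

lemma index_diagm_mult_vec:
  assumes w: "w \<in> carrier_vec d" and a: "a < d"
  shows "(diagm d lam *\<^sub>v w) $ a = complex_of_real (lam a) * w $ a"
proof -
  have "(diagm d lam *\<^sub>v w) $ a = (\<Sum>i\<in>{0..<d}. diagm d lam $$ (a,i) * w $ i)"
    using w a by (simp add: scalar_prod_def)
  also have "\<dots> = (\<Sum>i\<in>{0..<d}. if i = a then complex_of_real (lam a) * w $ a else 0)"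
    by (rule sum.cong, auto simp: diagm_def a)
  also have "\<dots> = complex_of_real (lam a) * w $ a" using a by simp
  finally show ?thesis .
qed

lemma eigenvalue_conj_diagmD:
  assumes U: "unitary d U" and ev: "eigenvalue (U * diagm d lam * adj U) mu"
  shows "\<exists>l<d. mu = complex_of_real (lam l)"
proof -
  define \<rho> where "\<rho> = U * diagm d lam * adj U"
  have Uc: "U \<in> carrier_mat d d" and UU: "adj U * U = 1\<^sub>m d" and UU': "U * adj U = 1\<^sub>m d"
    using U unfolding unitary_def by auto
  have rc: "\<rho> \<in> carrier_mat d d" unfolding \<rho>_def using Uc by simp
  have Ur: "adj U * \<rho> = diagm d lam * adj U"
  proof -
    have "adj U * \<rho> = (adj U * U) * (diagm d lam * adj U)" unfolding \<rho>_def using Uc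
      by (simp add: assoc_mult_mat[of _ d d _ d _ d])
    then show ?thesis using UU Uc by simp
  qed
  obtain v where v: "v \<in> carrier_vec d" "v \<noteq> 0\<^sub>v d" "\<rho> *\<^sub>v v = mu \<cdot>\<^sub>v v"
    using ev rc unfolding eigenvalue_def eigenvector_def \<rho>_def by auto
  define w where "w = adj U *\<^sub>v v"
  have wc: "w \<in> carrier_vec d"
    unfolding w_def by (rule mult_mat_vec_carrier[OF adj_carrier[OF Uc] v(1)])
  have "diagm d lam *\<^sub>v w = (diagm d lam * adj U) *\<^sub>v v"
    unfolding w_def by (rule assoc_mult_mat_vec[symmetric, of _ d d _ d]) (use Uc v in auto)
  also have "\<dots> = adj U *\<^sub>v (\<rho> *\<^sub>v v)"
    unfolding Ur[symmetric] by (rule assoc_mult_mat_vec[of _ d d _ d]) (use Uc rc v in auto)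
  also have "\<dots> = mu \<cdot>\<^sub>v w" unfolding v(3) w_def by (rule mult_mat_vec[OF adj_carrier[OF Uc] v(1)])
  finally have Dw: "diagm d lam *\<^sub>v w = mu \<cdot>\<^sub>v w" .
  have "U *\<^sub>v w = v" unfolding w_def using Uc v UU'
    by (simp flip: assoc_mult_mat_vec[of U d d "adj U" d v])
  then have "w \<noteq> 0\<^sub>v d" using v Uc by auto
  then obtain l where l: "l < d" "w $ l \<noteq> 0" using wc by (metis eq_vecI index_zero_vec carrier_vecD)
  have "complex_of_real (lam l) * w $ l = mu * w $ l"
    using arg_cong[OF Dw, of "\<lambda>x. x $ l"] index_diagm_mult_vec[OF wc l(1)] l wc by simp
  then show ?thesis using l by auto
qed

lemma eigenvalue_conj_diagmI:
  assumes U: "unitary d U" and l: "l < d"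
  shows "eigenvalue (U * diagm d lam * adj U) (complex_of_real (lam l))"
proof -
  define \<rho> where "\<rho> = U * diagm d lam * adj U"
  have Uc: "U \<in> carrier_mat d d" and UU: "adj U * U = 1\<^sub>m d"
    using U unfolding unitary_def by auto
  have rc: "\<rho> \<in> carrier_mat d d" unfolding \<rho>_def using Uc by simp
  have rU: "\<rho> * U = U * diagm d lam"
  proof -
    have "\<rho> * U = U * diagm d lam * (adj U * U)" unfolding \<rho>_def using Uc
      by (simp add: assoc_mult_mat[of _ d d _ d _ d])
    then show ?thesis using UU Uc by simp
  qed
  define v where "v = U *\<^sub>v unit_vec d l"
  have vc: "v \<in> carrier_vec d" unfolding v_def using Uc by simp
  have De: "diagm d lam *\<^sub>v unit_vec d l = complex_of_real (lam l) \<cdot>\<^sub>v unit_vec d l"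
    by (rule eq_vecI) (auto simp: diagm_def l)
  have "\<rho> *\<^sub>v v = (\<rho> * U) *\<^sub>v unit_vec d l" unfolding v_def
    by (rule assoc_mult_mat_vec[symmetric, of _ d d _ d]) (use Uc rc in auto)
  also have "\<dots> = U *\<^sub>v (diagm d lam *\<^sub>v unit_vec d l)" unfolding rU
    by (rule assoc_mult_mat_vec[of _ d d _ d]) (use Uc in auto)
  also have "\<dots> = complex_of_real (lam l) \<cdot>\<^sub>v v"
    unfolding De v_def by (rule mult_mat_vec[OF Uc unit_vec_carrier])
  finally have rv: "\<rho> *\<^sub>v v = complex_of_real (lam l) \<cdot>\<^sub>v v" .
  have av: "adj U *\<^sub>v v = unit_vec d l" unfolding v_def using Uc UU
    by (simp flip: assoc_mult_mat_vec[of "adj U" d d U d "unit_vec d l"])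
  have "v \<noteq> 0\<^sub>v d"
  proof
    assume "v = 0\<^sub>v d"
    moreover have "(adj U *\<^sub>v 0\<^sub>v d) $ l = 0" using Uc l by (simp add: scalar_prod_def)
    ultimately have "unit_vec d l $ l = (0::complex)" using av by simp
    then show False using l by simp
  qed
  then show ?thesis unfolding eigenvalue_def eigenvector_def \<rho>_def[symmetric] using vc rv rc by auto
qed

lemma eigenvalues_conj_diagm:
  assumes "unitary d U"
  shows "{Re l | l. eigenvalue (U * diagm d lam * adj U) l} = lam ` {..<d}"
  using eigenvalue_conj_diagmD[OF assms] eigenvalue_conj_diagmI[OF assms] by force

lemma mtrace_conj_diagm:
  assumes U: "unitary d U"
  shows "mtrace (U * diagm d lam * adj U) = complex_of_real (\<Sum>k<d. lam k)"
proof -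
  have Uc: "U \<in> carrier_mat d d" and UU: "adj U * U = 1\<^sub>m d" using U unfolding unitary_def by auto
  have "mtrace (U * diagm d lam * adj U) =
      (\<Sum>a<d. \<Sum>k<d. U $$ (a,k) * complex_of_real (lam k) * cnj (U $$ (a,k)))"
  proof -
    have dr: "dim_row (U * diagm d lam * adj U) = d" using Uc by simp
    show ?thesis
      unfolding mtrace_def dr by (rule sum.cong, simp, subst index_conj_diagm[OF Uc], auto)
  qed
  also have "\<dots> = (\<Sum>k<d. complex_of_real (lam k) * (adj U * U) $$ (k,k))"
    by (subst sum.swap, rule sum.cong)
      (auto simp: sum_distrib_left ac_simps index_adj_mult_self[OF Uc])
  also have "\<dots> = complex_of_real (\<Sum>k<d. lam k)" using UU by (simp add: of_real_sum)
  finally show ?thesis .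
qed

lemma density_spectral_decomposition:
  assumes rho: "density d \<rho>"
  obtains U lam where "unitary d U" "\<rho> = U * diagm d lam * adj U" "\<forall>l<d. 0 \<le> lam l"
    "(\<Sum>l<d. lam l) = 1" "lambda_max \<rho> = Max (lam ` {..<d})"
proof -
  have rc: "\<rho> \<in> carrier_mat d d" and h: "adj \<rho> = \<rho>"
    and pos: "\<forall>v \<in> carrier_vec d. 0 \<le> Re ((\<rho> *\<^sub>v v) \<bullet>c v)" and tr: "mtrace \<rho> = 1"
    using rho unfolding density_def psd_def by auto
  obtain U lam where U: "unitary d U" and r: "\<rho> = U * diagm d lam * adj U"
    using hermitian_unitary_diagonalisation[OF rc h] by blast
  have nonneg: "\<forall>l<d. 0 \<le> lam l"
  proof (intro allI impI)
    fix l assume l: "l < d"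
    have cc: "col U l \<in> carrier_vec d" using U unfolding unitary_def col_def by auto
    have "(\<rho> *\<^sub>v col U l) \<bullet>c col U l = complex_of_real (lam l)"
      unfolding quad_form_eq[OF rc cc] unfolding r by (rule quad_form_unitary_col[OF U l])
    then show "0 \<le> lam l" using pos cc by force
  qed
  have "(\<Sum>l<d. lam l) = 1" using tr mtrace_conj_diagm[OF U] unfolding r by (metis of_real_eq_1_iff)
  moreover have "lambda_max \<rho> = Max (lam ` {..<d})"
    unfolding lambda_max_def r eigenvalues_conj_diagm[OF U] ..
  ultimately show ?thesis using that U r nonneg by blast
qed

abbreviation uniform_state :: "nat \<Rightarrow> nat \<Rightarrow> complex mat" where
  "uniform_state d k \<equiv> (1 / complex_of_nat k) \<cdot>\<^sub>m Pi_proj d k"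

lemma uniform_state_eq_diagm: "uniform_state d k = diagm d (\<lambda>j. if j < k then 1 / real k else 0)"
  by (rule eq_matI) (auto simp: Pi_proj_def diagm_def)

lemma sum_lessThan_split_at:
  assumes "k \<le> (d::nat)"
  shows "(\<Sum>i<d. if i < k then f i else g i) =
    (\<Sum>i<k. f i) + (\<Sum>i\<in>{k..<d}. g i :: 'a :: comm_monoid_add)"
proof -
  have "{..<d} \<inter> {x. x < k} = {..<k}" "{..<d} \<inter> - {x. x < k} = {k..<d}" using assms by auto
  then show ?thesis by (simp add: sum.If_cases)
qed

lemma uniform_state_density:
  assumes k: "1 \<le> k" "k \<le> d"
  shows "density d (uniform_state d k)"
proof -
  define q where "q j = (if j < k then 1 / real k else 0)" for j
  have P: "uniform_state d k = 1\<^sub>m d * diagm d q * adj (1\<^sub>m d)"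
    unfolding uniform_state_eq_diagm q_def[symmetric] by simp
  have I: "unitary d (1\<^sub>m d)" by (simp add: unitary_def)
  have "adj (uniform_state d k) = uniform_state d k"
    by (rule eq_matI) (auto simp: Pi_proj_def)
  moreover have "0 \<le> Re ((uniform_state d k *\<^sub>v v) \<bullet>c v)" if v: "v \<in> carrier_vec d" for v
  proof -
    have "(uniform_state d k *\<^sub>v v) \<bullet>c v =
        complex_of_real (\<Sum>j<d. q j * (cmod (col_inner d (1\<^sub>m d) v j))\<^sup>2)"
      unfolding P by (subst quad_form_eq[OF _ v]) (simp, rule quad_form_conj_diagm, simp)
    moreover have "0 \<le> (\<Sum>j<d. q j * (cmod (col_inner d (1\<^sub>m d) v j))\<^sup>2)"
      by (intro sum_nonneg mult_nonneg_nonneg) (auto simp: q_def)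
    ultimately show ?thesis by simp
  qed
  moreover have "(\<Sum>j<d. q j) = 1"
    unfolding q_def using k by (simp add: sum_lessThan_split_at)
  then have "mtrace (uniform_state d k) = 1" unfolding P mtrace_conj_diagm[OF I] by simp
  ultimately show ?thesis unfolding density_def psd_def by (auto simp: Pi_proj_def)
qed

lemma Max_probability_bounds:
  assumes d: "0 < d" and nonneg: "\<forall>l<d. 0 \<le> lam l" and sum1: "(\<Sum>l<d. lam l) = 1"
  shows "1 / real d \<le> Max (lam ` {..<d})" "Max (lam ` {..<d}) \<le> 1"
proof -
  let ?M = "Max (lam ` {..<d})"
  have "1 \<le> (\<Sum>l<d. ?M)" unfolding sum1[symmetric] by (rule sum_mono) auto
  then show "1 / real d \<le> ?M" using d by (simp add: field_simps)
  have "?M \<in> lam ` {..<d}" by (rule Max_in) (use d in auto)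
  then obtain l where l: "l < d" "?M = lam l" by auto
  have "lam l \<le> (\<Sum>l<d. lam l)" by (rule member_le_sum) (use l nonneg in auto)
  then show "?M \<le> 1" using l sum1 by simp
qed

lemma lambda_max_bounds:
  assumes d: "0 < d" and rho: "density d \<rho>"
  shows "1 / real d \<le> lambda_max \<rho>" "lambda_max \<rho> \<le> 1" "0 < lambda_max \<rho>"
proof -
  show lo: "1 / real d \<le> lambda_max \<rho>" and "lambda_max \<rho> \<le> 1"
    using density_spectral_decomposition[OF rho] Max_probability_bounds[OF d] by metis+
  show "0 < lambda_max \<rho>" using lo d by (smt (verit) divide_pos_pos of_nat_0_less_iff)
qed

lemma floor_inv_lambda_max_bounds:
  assumes d: "0 < d" and rho: "density d \<rho>"
  shows "1 \<le> \<lfloor>1 / lambda_max \<rho>\<rfloor>" "\<lfloor>1 / lambda_max \<rho>\<rfloor> \<le> int d"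
proof -
  note bounds = lambda_max_bounds[OF d rho]
  have "1 \<le> 1 / lambda_max \<rho>" using bounds by simp
  then show "1 \<le> \<lfloor>1 / lambda_max \<rho>\<rfloor>" by simp
  have "1 / lambda_max \<rho> \<le> real d" using bounds d by (simp add: field_simps)
  then show "\<lfloor>1 / lambda_max \<rho>\<rfloor> \<le> int d" by linarith
qed

section \<open>Largest eigenvalues of unital images of uniform states\<close>

text \<open>The quadratic form of a Kraus sum splits into nonnegative terms \<open>|\<langle>K\<^sub>i e\<^sub>j, x\<rangle>|\<^sup>2\<close>;
  unitality says that with all weights equal to one they add up to \<open>|x|\<^sup>2\<close>.\<close>

lemma unital_image_quad_form_le:
  assumes E: "unital_cptp d E" and x: "x \<in> carrier_vec d" and q: "\<forall>j<d. q j \<le> c"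
  shows "Re (quad_form d (E (diagm d q)) x) \<le> c * (\<Sum>a<d. (cmod (x$a))\<^sup>2)"
proof -
  obtain n K where K: "\<forall>i<n. K i \<in> carrier_mat d d"
    and KK: "msum d n (\<lambda>i. K i * adj (K i)) = 1\<^sub>m d"
    and EK: "\<forall>\<rho> \<in> carrier_mat d d. E \<rho> = msum d n (\<lambda>i. K i * \<rho> * adj (K i))"
    using E unfolding unital_cptp_def by blast
  define z where "z i j = col_inner d (K i) x j" for i j
  have "quad_form d (E (diagm d q)) x = (\<Sum>i<n. quad_form d (K i * diagm d q * adj (K i)) x)"
    using EK K by (simp add: quad_form_msum)
  also have "\<dots> = complex_of_real (\<Sum>i<n. \<Sum>j<d. q j * (cmod (z i j))\<^sup>2)"
    unfolding z_def
    by (subst of_real_sum, rule sum.cong, simp, rule quad_form_conj_diagm, use K in auto)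
  finally have Eq: "Re (quad_form d (E (diagm d q)) x) = (\<Sum>i<n. \<Sum>j<d. q j * (cmod (z i j))\<^sup>2)"
    by simp
  have "complex_of_real (\<Sum>a<d. (cmod (x$a))\<^sup>2) = quad_form d (msum d n (\<lambda>i. K i * adj (K i))) x"
    unfolding KK quad_form_one ..
  also have "\<dots> = (\<Sum>i<n. quad_form d (K i * diagm d (\<lambda>_. 1) * adj (K i)) x)"
    using K by (subst quad_form_msum) (auto simp: diagm_one intro!: sum.cong)
  also have "\<dots> = complex_of_real (\<Sum>i<n. \<Sum>j<d. 1 * (cmod (z i j))\<^sup>2)"
    unfolding z_def
    by (subst of_real_sum, rule sum.cong, simp, rule quad_form_conj_diagm, use K in auto)
  finally have norm: "(\<Sum>a<d. (cmod (x$a))\<^sup>2) = (\<Sum>i<n. \<Sum>j<d. (cmod (z i j))\<^sup>2)"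
    by (simp only: of_real_eq_iff mult_1)
  have "(\<Sum>i<n. \<Sum>j<d. q j * (cmod (z i j))\<^sup>2) \<le> (\<Sum>i<n. \<Sum>j<d. c * (cmod (z i j))\<^sup>2)"
    using q by (intro sum_mono mult_right_mono) auto
  also have "\<dots> = c * (\<Sum>a<d. (cmod (x$a))\<^sup>2)"
    unfolding norm by (simp add: sum_distrib_left)
  finally show ?thesis unfolding Eq .
qed

lemma lambda_max_unital_image_le:
  assumes E: "unital_cptp d E" and k: "1 \<le> k" "k \<le> d"
    and rho: "density d (E (uniform_state d k))"
  shows "lambda_max (E (uniform_state d k)) \<le> 1 / real k"
proof -
  obtain U lam where U: "unitary d U" and r: "E (uniform_state d k) = U * diagm d lam * adj U"
    and M: "lambda_max (E (uniform_state d k)) = Max (lam ` {..<d})"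
    using density_spectral_decomposition[OF rho] by blast
  have "lam l \<le> 1 / real k" if l: "l < d" for l
  proof -
    have cc: "col U l \<in> carrier_vec d" using U unfolding unitary_def col_def by auto
    have "lam l = Re (quad_form d (E (uniform_state d k)) (col U l))"
      unfolding r quad_form_unitary_col[OF U l] by simp
    also have "\<dots> \<le> (1 / real k) * (\<Sum>a<d. (cmod (col U l $ a))\<^sup>2)"
      unfolding uniform_state_eq_diagm by (rule unital_image_quad_form_le[OF E cc]) auto
    also have "\<dots> = 1 / real k" using unitary_col_norm[OF U l] by simp
    finally show ?thesis .
  qed
  moreover have "lam ` {..<d} \<noteq> {}" using k by (simp add: lessThan_empty_iff)
  ultimately show ?thesis unfolding M by (subst Max_le_iff) auto
qed

section \<open>Unital channels realising majorised states\<close>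

lemma sum_lessThan_mult_div_mod:
  "(\<Sum>t<(d::nat)*d. f (t div d) (t mod d)) = (\<Sum>i<d. \<Sum>l<d. (f i l :: 'a :: comm_monoid_add))"
proof (cases "d = 0")
  case True then show ?thesis by simp
next
  case False
  then have d: "0 < d" by simp
  have "(\<Sum>i<d. \<Sum>l<d. f i l) = (\<Sum>(i,l)\<in>{..<d}\<times>{..<d}. f i l)" by (simp add: sum.cartesian_product)
  also have "\<dots> = (\<Sum>t<d*d. f (t div d) (t mod d))"
  proof (rule sum.reindex_bij_witness[of _ "\<lambda>t. (t div d, t mod d)" "\<lambda>(i,l). i*d + l"])
    fix t assume "t \<in> {..<d*d}"
    then show "(\<lambda>(i,l). i*d + l) (t div d, t mod d) = t" by simp
    show "(t div d, t mod d) \<in> {..<d}\<times>{..<d}" using \<open>t \<in> {..<d*d}\<close> d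
      by (auto simp: less_mult_imp_div_less)
  next
    fix p assume p: "p \<in> {..<d}\<times>{..<d}"
    obtain i l where il: "p = (i,l)" "i < d" "l < d" using p by auto
    have "i * d + l < d * d"
    proof -
      have "i * d + l < i * d + d" using il by simp
      also have "\<dots> = (i + 1) * d" by simp
      also have "\<dots> \<le> d * d" using il by (intro mult_right_mono) auto
      finally show ?thesis .
    qed
    then show "(\<lambda>(i,l). i*d + l) p \<in> {..<d*d}" using il by simp
    show "((\<lambda>(i,l). i*d + l) p div d, (\<lambda>(i,l). i*d + l) p mod d) = p" using il by simp
    show "f (((\<lambda>(i,l). i*d + l) p) div d) (((\<lambda>(i,l). i*d + l) p) mod d) =
        (case p of (i,l) \<Rightarrow> f i l)"
      using il by simp
  qed
  finally show ?thesis by simp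
qed

text \<open>The Kraus operators \<open>\<surd>w\<^sub>i\<^sub>l U |l\<rangle>\<langle>i|\<close>, indexed by \<open>t = i d + l\<close>.\<close>

definition stochastic_kraus ::
    "nat \<Rightarrow> (nat \<Rightarrow> nat \<Rightarrow> real) \<Rightarrow> complex mat \<Rightarrow> nat \<Rightarrow> complex mat" where
  "stochastic_kraus d w U t = mat d d (\<lambda>(a,b).
      complex_of_real (sqrt (w (t div d) (t mod d))) * U $$ (a, t mod d) *
      (if b = t div d then 1 else 0))"

lemma stochastic_kraus_carrier [simp]: "stochastic_kraus d w U t \<in> carrier_mat d d"
  by (simp add: stochastic_kraus_def)

lemma index_stochastic_kraus_conj_diagm:
  assumes U: "U \<in> carrier_mat d d" and t: "t < d*d" and a: "a < d" and b: "b < d"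
    and w: "0 \<le> w (t div d) (t mod d)"
  shows "(stochastic_kraus d w U t * diagm d q * adj (stochastic_kraus d w U t)) $$ (a,b) =
     complex_of_real (w (t div d) (t mod d) * q (t div d)) *
     U $$ (a, t mod d) * cnj (U $$ (b, t mod d))"
proof -
  define i where "i = t div d"
  define l where "l = t mod d"
  define s where "s = sqrt (w i l)"
  have i: "i < d" unfolding i_def using t by (auto simp: less_mult_imp_div_less)
  have d: "0 < d" using a by simp
  have l: "l < d" unfolding l_def using d by simp
  have ss: "s * s = w i l" unfolding s_def using w i_def l_def by simp
  have "(stochastic_kraus d w U t * diagm d q * adj (stochastic_kraus d w U t)) $$ (a,b) =
     (\<Sum>c<d. if c = i then complex_of_real (s * s * q i) * U $$ (a,l) * cnj (U $$ (b,l)) else 0)"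
    by (subst index_conj_diagm[OF stochastic_kraus_carrier a b], rule sum.cong,
        auto simp: stochastic_kraus_def a b i_def[symmetric] l_def[symmetric] s_def[symmetric])
  also have "\<dots> = complex_of_real (s * s * q i) * U $$ (a,l) * cnj (U $$ (b,l))" using i by simp
  finally show ?thesis unfolding ss i_def l_def .
qed

lemma index_adj_stochastic_kraus_mult:
  assumes U: "unitary d U" and t: "t < d*d" and a: "a < d" and b: "b < d"
    and w: "0 \<le> w (t div d) (t mod d)"
  shows "(adj (stochastic_kraus d w U t) * stochastic_kraus d w U t) $$ (a,b) =
     (if a = t div d \<and> b = t div d then complex_of_real (w (t div d) (t mod d)) else 0)"
proof -
  define i where "i = t div d"
  define l where "l = t mod d"
  define s where "s = sqrt (w i l)"
  have Uc: "U \<in> carrier_mat d d" and UU: "adj U * U = 1\<^sub>m d" using U unfolding unitary_def by auto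
  have d: "0 < d" using a by simp
  have l: "l < d" unfolding l_def using d by simp
  have ss: "s * s = w i l" unfolding s_def using w i_def l_def by simp
  have cn: "(\<Sum>c<d. cnj (U $$ (c,l)) * U $$ (c,l)) = 1"
    using index_adj_mult_self[OF Uc l l] UU l by simp
  have "(adj (stochastic_kraus d w U t) * stochastic_kraus d w U t) $$ (a,b) =
     (\<Sum>c<d. (if a = i \<and> b = i then complex_of_real (s * s) else 0) *
       (cnj (U $$ (c,l)) * U $$ (c,l)))"
    by (subst index_adj_mult_self[OF stochastic_kraus_carrier a b], rule sum.cong,
        auto simp: stochastic_kraus_def a b i_def[symmetric] l_def[symmetric] s_def[symmetric])
  also have "\<dots> = (if a = i \<and> b = i then complex_of_real (s * s) else 0)"
    by (simp add: sum_distrib_left[symmetric] cn)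
  finally show ?thesis unfolding ss i_def l_def .
qed

definition stochastic_channel ::
    "nat \<Rightarrow> (nat \<Rightarrow> nat \<Rightarrow> real) \<Rightarrow> complex mat \<Rightarrow> complex mat \<Rightarrow> complex mat" where
  "stochastic_channel d w U \<rho> =
     msum d (d*d) (\<lambda>t. stochastic_kraus d w U t * \<rho> * adj (stochastic_kraus d w U t))"

definition doubly_stochastic :: "nat \<Rightarrow> (nat \<Rightarrow> nat \<Rightarrow> real) \<Rightarrow> bool" where
  "doubly_stochastic d w \<longleftrightarrow> (\<forall>i<d. \<forall>l<d. 0 \<le> w i l) \<and>
     (\<forall>i<d. (\<Sum>l<d. w i l) = 1) \<and> (\<forall>l<d. (\<Sum>i<d. w i l) = 1)"

lemma div_mod_less_square: "t < d * d \<Longrightarrow> t div d < d \<and> t mod d < (d::nat)"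
  by (cases "d = 0") (auto simp: less_mult_imp_div_less)

lemma diagm_cong: "(\<And>l. l < n \<Longrightarrow> f l = g l) \<Longrightarrow> diagm n f = diagm n g"
  by (rule eq_matI) (auto simp: diagm_def)

lemma stochastic_channel_diagm:
  assumes U: "U \<in> carrier_mat d d" and w: "\<forall>i<d. \<forall>l<d. 0 \<le> w i l"
  shows "stochastic_channel d w U (diagm d q) = U * diagm d (\<lambda>l. \<Sum>i<d. w i l * q i) * adj U"
proof (rule eq_matI)
  fix a b assume "a < dim_row (U * diagm d (\<lambda>l. \<Sum>i<d. w i l * q i) * adj U)"
    "b < dim_col (U * diagm d (\<lambda>l. \<Sum>i<d. w i l * q i) * adj U)"
  then have ab: "a < d" "b < d" using U by auto
  have "stochastic_channel d w U (diagm d q) $$ (a,b) =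
     (\<Sum>t<d*d. complex_of_real (w (t div d) (t mod d) * q (t div d)) *
        U $$ (a, t mod d) * cnj (U $$ (b, t mod d)))"
    unfolding stochastic_channel_def using U ab w div_mod_less_square
    by (subst index_msum) (auto intro!: sum.cong simp: index_stochastic_kraus_conj_diagm)
  also have "\<dots> = (\<Sum>i<d. \<Sum>l<d. complex_of_real (w i l * q i) * U $$ (a,l) * cnj (U $$ (b,l)))"
    by (rule sum_lessThan_mult_div_mod)
  also have "\<dots> = (\<Sum>l<d. U $$ (a,l) * complex_of_real (\<Sum>i<d. w i l * q i) * cnj (U $$ (b,l)))"
    by (subst sum.swap) (simp add: of_real_sum sum_distrib_left sum_distrib_right ac_simps)
  also have "\<dots> = (U * diagm d (\<lambda>l. \<Sum>i<d. w i l * q i) * adj U) $$ (a,b)"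
    by (rule index_conj_diagm[OF U ab, symmetric])
  finally show "stochastic_channel d w U (diagm d q) $$ (a,b) = \<dots>" .
qed (use U in \<open>auto simp: stochastic_channel_def
        intro!: msum_carrier[THEN carrier_matD(1)] msum_carrier[THEN carrier_matD(2)]\<close>)

lemma stochastic_channel_trace_preserving:
  assumes U: "unitary d U" and w: "doubly_stochastic d w"
  shows "msum d (d*d) (\<lambda>t. adj (stochastic_kraus d w U t) * stochastic_kraus d w U t) = 1\<^sub>m d"
    (is "msum d (d*d) ?KK = _")
proof (rule eq_matI)
  have nonneg: "\<forall>i<d. \<forall>l<d. 0 \<le> w i l" and row: "\<forall>i<d. (\<Sum>l<d. w i l) = 1"
    using w unfolding doubly_stochastic_def by auto
  fix a b assume "a < dim_row (1\<^sub>m d)" "b < dim_col (1\<^sub>m d)"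
  then have ab: "a < d" "b < d" by auto
  have "msum d (d*d) ?KK $$ (a,b) =
     (\<Sum>t<d*d. if a = t div d \<and> b = t div d then complex_of_real (w (t div d) (t mod d)) else 0)"
    using ab nonneg div_mod_less_square
    by (subst index_msum) (auto intro!: sum.cong simp: index_adj_stochastic_kraus_mult[OF U])
  also have "\<dots> = (\<Sum>i<d. \<Sum>l<d. if a = i \<and> b = i then complex_of_real (w i l) else 0)"
    by (rule sum_lessThan_mult_div_mod)
  also have "\<dots> = (\<Sum>i<d. if i = a then (if b = a then complex_of_real (\<Sum>l<d. w i l) else 0) else 0)"
    by (rule sum.cong) (auto simp: of_real_sum)
  also have "\<dots> = 1\<^sub>m d $$ (a,b)" using ab row by simp
  finally show "msum d (d*d) ?KK $$ (a,b) = 1\<^sub>m d $$ (a,b)" .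
qed (auto intro!: msum_carrier[THEN carrier_matD(1)] msum_carrier[THEN carrier_matD(2)])

lemma stochastic_channel_unital_cptp:
  assumes U: "unitary d U" and w: "doubly_stochastic d w"
  shows "unital_cptp d (stochastic_channel d w U)"
proof -
  let ?K = "stochastic_kraus d w U"
  have Uc: "U \<in> carrier_mat d d" and UU: "U * adj U = 1\<^sub>m d" using U unfolding unitary_def by auto
  have nonneg: "\<forall>i<d. \<forall>l<d. 0 \<le> w i l" and col: "\<forall>l<d. (\<Sum>i<d. w i l) = 1"
    using w unfolding doubly_stochastic_def by auto
  have "msum d (d*d) (\<lambda>t. ?K t * adj (?K t)) = stochastic_channel d w U (diagm d (\<lambda>_. 1))"
    unfolding stochastic_channel_def diagm_one by (metis stochastic_kraus_carrier right_mult_one_mat)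
  also have "\<dots> = U * diagm d (\<lambda>l. \<Sum>i<d. w i l * 1) * adj U"
    by (rule stochastic_channel_diagm[OF Uc nonneg])
  also have "diagm d (\<lambda>l. \<Sum>i<d. w i l * 1) = 1\<^sub>m d"
    unfolding diagm_one[symmetric] using col by (intro diagm_cong) simp
  also have "U * 1\<^sub>m d * adj U = 1\<^sub>m d" using Uc UU by simp
  finally have unital: "msum d (d*d) (\<lambda>t. ?K t * adj (?K t)) = 1\<^sub>m d" .
  show ?thesis unfolding unital_cptp_def
    by (rule exI[of _ "d*d"], rule exI[of _ ?K])
      (simp add: stochastic_channel_def stochastic_channel_trace_preserving[OF U w] unital)
qed

text \<open>The first \<open>k\<close> rows are \<open>\<lambda>\<close>; the remaining \<open>d - k\<close> rows share the leftover mass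
  \<open>1 - k \<lambda>\<^sub>l\<close> of each column equally.\<close>

definition majorising_matrix :: "nat \<Rightarrow> nat \<Rightarrow> (nat \<Rightarrow> real) \<Rightarrow> nat \<Rightarrow> nat \<Rightarrow> real" where
  "majorising_matrix d k lam i l =
     (if i < k then lam l else (1 - real k * lam l) / (real d - real k))"

lemma majorising_matrix_doubly_stochastic:
  assumes k: "1 \<le> k" "k \<le> d" and nonneg: "\<forall>l<d. 0 \<le> lam l"
    and sum1: "(\<Sum>l<d. lam l) = 1" and le: "\<forall>l<d. lam l \<le> 1 / real k"
  shows "doubly_stochastic d (majorising_matrix d k lam)"
proof -
  let ?w = "majorising_matrix d k lam"
  have "0 \<le> ?w i l" if "i < d" "l < d" for i l
  proof (cases "i < k")
    case False
    then have "real k < real d" using that by simp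
    moreover have "real k * lam l \<le> 1" using le that k by (simp add: field_simps)
    ultimately show ?thesis using False by (simp add: majorising_matrix_def)
  qed (use nonneg that in \<open>simp add: majorising_matrix_def\<close>)
  moreover have "(\<Sum>l<d. ?w i l) = 1" if i: "i < d" for i
  proof (cases "i < k")
    case False
    then have kd: "real k < real d" using i by simp
    have "(\<Sum>l<d. ?w i l) = (\<Sum>l<d. 1 - real k * lam l) / (real d - real k)"
      using False by (simp add: majorising_matrix_def sum_divide_distrib)
    also have "(\<Sum>l<d. 1 - real k * lam l) = real d - real k"
      by (simp add: sum_subtractf sum_distrib_left[symmetric] sum1)
    finally show ?thesis using kd by simp
  qed (use sum1 in \<open>simp add: majorising_matrix_def\<close>)
  moreover have "(\<Sum>i<d. ?w i l) = 1" if l: "l < d" for l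
  proof (cases "k = d")
    case True
    have "(\<Sum>l<d. 1 / real d - lam l) = 0" using sum1 True k by (simp add: sum_subtractf)
    moreover have "\<forall>l\<in>{..<d}. 0 \<le> 1 / real d - lam l" using le True by auto
    ultimately have "\<forall>l\<in>{..<d}. 1 / real d - lam l = 0" by (subst (asm) sum_nonneg_eq_0_iff) auto
    then have "lam l = 1 / real d" using l by auto
    then show ?thesis using True k by (simp add: majorising_matrix_def)
  next
    case False
    then have kd: "real k < real d" using k by simp
    have "(\<Sum>i<d. ?w i l) =
        (\<Sum>i<k. lam l) + (\<Sum>i\<in>{k..<d}. (1 - real k * lam l) / (real d - real k))"
      unfolding majorising_matrix_def by (rule sum_lessThan_split_at[OF k(2)])
    also have "\<dots> = 1" using kd k by (simp add: of_nat_diff)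
    finally show ?thesis .
  qed
  ultimately show ?thesis unfolding doubly_stochastic_def by blast
qed

lemma majorising_matrix_uniform:
  assumes k: "1 \<le> k" "k \<le> d"
  shows "(\<Sum>i<d. majorising_matrix d k lam i l * (if i < k then 1 / real k else 0)) = lam l"
proof -
  have "(\<Sum>i<d. majorising_matrix d k lam i l * (if i < k then 1 / real k else 0)) =
      (\<Sum>i<k. lam l / real k)"
    using sum_lessThan_split_at[OF k(2), of "\<lambda>_. lam l / real k" "\<lambda>_. 0"]
    by (simp add: majorising_matrix_def if_distrib cong: if_cong)
  also have "\<dots> = lam l" using k by simp
  finally show ?thesis .
qed

lemma unital_image_uniform_state:
  assumes k: "1 \<le> k" "k \<le> d" and rho: "density d \<rho>" and le: "lambda_max \<rho> \<le> 1 / real k"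
  shows "\<exists>E. unital_cptp d E \<and> E (uniform_state d k) = \<rho>"
proof -
  obtain U lam where U: "unitary d U" and r: "\<rho> = U * diagm d lam * adj U"
    and nonneg: "\<forall>l<d. 0 \<le> lam l" and sum1: "(\<Sum>l<d. lam l) = 1"
    and M: "lambda_max \<rho> = Max (lam ` {..<d})"
    using density_spectral_decomposition[OF rho] by blast
  have "lam l \<le> 1 / real k" if "l < d" for l
  proof -
    have "lam l \<le> Max (lam ` {..<d})" using that by simp
    then show ?thesis using M le by linarith
  qed
  then have w: "doubly_stochastic d (majorising_matrix d k lam)" (is "doubly_stochastic d ?w")
    using majorising_matrix_doubly_stochastic[OF k nonneg sum1] by blast
  have "\<forall>i<d. \<forall>l<d. 0 \<le> ?w i l" using w unfolding doubly_stochastic_def by blast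
  then have "stochastic_channel d ?w U (uniform_state d k) =
      U * diagm d (\<lambda>l. \<Sum>i<d. ?w i l * (if i < k then 1 / real k else 0)) * adj U"
    unfolding uniform_state_eq_diagm by (intro stochastic_channel_diagm unitary_carrier[OF U])
  also have "\<dots> = \<rho>" using r by (simp add: majorising_matrix_uniform[OF k])
  finally show ?thesis using stochastic_channel_unital_cptp[OF U w] by blast
qed

section \<open>The cost of a specification\<close>

lemma converts_uniform_state_iff:
  assumes k: "1 \<le> k" "k \<le> d" and V: "V \<subseteq> Omega d"
  shows "converts d {uniform_state d k} V \<longleftrightarrow> (\<exists>\<rho>\<in>V. lambda_max \<rho> \<le> 1 / real k)"
proof
  assume "converts d {uniform_state d k} V"
  then obtain E where E: "unital_cptp d E" "E (uniform_state d k) \<in> V"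
    unfolding converts_def by auto
  then have "density d (E (uniform_state d k))" using V unfolding Omega_def by auto
  then show "\<exists>\<rho>\<in>V. lambda_max \<rho> \<le> 1 / real k"
    using lambda_max_unital_image_le[OF E(1) k] E(2) by blast
next
  assume "\<exists>\<rho>\<in>V. lambda_max \<rho> \<le> 1 / real k"
  then obtain \<rho> where "\<rho> \<in> V" "lambda_max \<rho> \<le> 1 / real k" by blast
  moreover from this have "density d \<rho>" using V unfolding Omega_def by auto
  ultimately show "converts d {uniform_state d k} V"
    using unital_image_uniform_state[OF k] unfolding converts_def by fastforce
qed

lemma le_inverse_iff_le_floor_inverse:
  assumes "0 < x" "1 \<le> k"
  shows "x \<le> 1 / real k \<longleftrightarrow> int k \<le> \<lfloor>1 / x\<rfloor>"
  using assms by (simp add: le_floor_iff field_simps)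

text \<open>Among the currencies, \<open>\<Omega>\<close> is never cheaper than \<open>C\<^sup>d\<close>: the uniform state \<open>\<Pi>\<^sup>d/d\<close> is
  itself in \<open>\<Omega>\<close>, so anything obtainable from \<open>\<Omega>\<close> is obtainable from \<open>C\<^sup>d\<close>, whose value is \<open>0\<close> too.\<close>

lemma currency_convertsE:
  assumes d: "0 < d" and C: "(C, v) \<in> currency d" "converts d C V"
  obtains k where "1 \<le> k" "k \<le> d" "converts d {uniform_state d k} V"
    "v = log 2 (real d) - log 2 (real k)"
proof -
  from C(1) consider (uniform) k where "C = {uniform_state d k}"
      "v = log 2 (real d) - log 2 (real k)" "1 \<le> k" "k \<le> d"
    | (Omega) "C = Omega d" "v = 0"
    unfolding currency_def by blast
  then show ?thesis
  proof cases
    case uniform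
    then show ?thesis using that C(2) by blast
  next
    case Omega
    have "density d (uniform_state d d)" by (rule uniform_state_density) (use d in simp_all)
    then have "converts d {uniform_state d d} V"
      using C(2) Omega unfolding converts_def Omega_def by blast
    then show ?thesis using that[of d] Omega d by simp
  qed
qed

lemma Cost_eq_log_max_floor:
  assumes d: "0 < d" and V: "V \<subseteq> Omega d" and \<rho>0: "\<rho>0 \<in> V"
    and max: "\<And>\<rho>. \<rho> \<in> V \<Longrightarrow> \<lfloor>1 / lambda_max \<rho>\<rfloor> \<le> \<lfloor>1 / lambda_max \<rho>0\<rfloor>"
  shows "Cost d V = log 2 (real d) - log 2 (real_of_int \<lfloor>1 / lambda_max \<rho>0\<rfloor>)"
proof -
  have dens: "density d \<rho>" if "\<rho> \<in> V" for \<rho> using V that unfolding Omega_def by auto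
  define N where "N = nat \<lfloor>1 / lambda_max \<rho>0\<rfloor>"
  have F: "1 \<le> \<lfloor>1 / lambda_max \<rho>0\<rfloor>" "\<lfloor>1 / lambda_max \<rho>0\<rfloor> \<le> int d"
    by (rule floor_inv_lambda_max_bounds[OF d dens[OF \<rho>0]])+
  have "1 \<le> nat z \<and> nat z \<le> d \<and> int (nat z) = z" if "1 \<le> z" "z \<le> int d" for z
    using that by auto
  from this[OF F] have N: "1 \<le> N" "N \<le> d" and N_int: "int N = \<lfloor>1 / lambda_max \<rho>0\<rfloor>"
    unfolding N_def by auto
  have reachable_le_N: "k \<le> N" if k: "1 \<le> k" "k \<le> d" "converts d {uniform_state d k} V" for k
  proof -
    obtain \<rho> where \<rho>: "\<rho> \<in> V" "lambda_max \<rho> \<le> 1 / real k"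
      using k converts_uniform_state_iff[OF k(1,2) V] by blast
    have "int k \<le> \<lfloor>1 / lambda_max \<rho>\<rfloor>"
      using le_inverse_iff_le_floor_inverse[OF lambda_max_bounds(3)[OF d dens[OF \<rho>(1)]] k(1)] \<rho>(2)
      by simp
    also have "\<dots> \<le> int N" unfolding N_int by (rule max[OF \<rho>(1)])
    finally show "k \<le> N" by simp
  qed
  have "Inf {v. \<exists>C. (C, v) \<in> currency d \<and> converts d C V} = log 2 (real d) - log 2 (real N)"
  proof (rule cInf_eq_minimum)
    have "lambda_max \<rho>0 \<le> 1 / real N"
      using le_inverse_iff_le_floor_inverse[OF lambda_max_bounds(3)[OF d dens[OF \<rho>0]] N(1)] N_int
      by simp
    then have "converts d {uniform_state d N} V"
      using converts_uniform_state_iff[OF N(1,2) V] \<rho>0 by blast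
    then show "log 2 (real d) - log 2 (real N) \<in> {v. \<exists>C. (C, v) \<in> currency d \<and> converts d C V}"
      using N unfolding currency_def by blast
  next
    fix v assume "v \<in> {v. \<exists>C. (C, v) \<in> currency d \<and> converts d C V}"
    then obtain C where C: "(C, v) \<in> currency d" "converts d C V" by blast
    obtain k where k: "1 \<le> k" "k \<le> d" "converts d {uniform_state d k} V"
      and v: "v = log 2 (real d) - log 2 (real k)"
      using currency_convertsE[OF d C] .
    show "log 2 (real d) - log 2 (real N) \<le> v" unfolding v using reachable_le_N[OF k] k(1) by simp
  qed
  moreover have "real N = real_of_int \<lfloor>1 / lambda_max \<rho>0\<rfloor>" unfolding N_int[symmetric] by simp
  ultimately show ?thesis unfolding Cost_def by simp
qed

lemma floor_inv_lambda_max_maximiser: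
  assumes "0 < d" "V \<noteq> {}" "V \<subseteq> Omega d"
  obtains \<rho>0 where "\<rho>0 \<in> V" "\<And>\<rho>. \<rho> \<in> V \<Longrightarrow> \<lfloor>1 / lambda_max \<rho>\<rfloor> \<le> \<lfloor>1 / lambda_max \<rho>0\<rfloor>"
proof -
  let ?N = "\<lambda>\<rho>. \<lfloor>1 / lambda_max \<rho>\<rfloor>"
  have "?N ` V \<subseteq> {1..int d}"
    using floor_inv_lambda_max_bounds[OF assms(1)] assms(3) unfolding Omega_def by auto
  then have fin: "finite (?N ` V)" by (rule finite_subset) simp
  then have "Max (?N ` V) \<in> ?N ` V" using assms(2) by (intro Max_in) auto
  then obtain \<rho>0 where "\<rho>0 \<in> V" "?N \<rho>0 = Max (?N ` V)" by auto
  then show ?thesis using that fin by simp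
qed

lemma powr_Hmin:
  assumes "0 < d" "density d \<rho>"
  shows "2 powr Hmin \<rho> = 1 / lambda_max \<rho>"
  using lambda_max_bounds(3)[OF assms] by (simp add: Hmin_def powr_minus divide_inverse)

theorem mainTheorem12:
  fixes d :: nat and V :: "complex mat set"
  assumes "0 < d" and "V \<noteq> {}" and "V \<subseteq> Omega d"
  shows "Cost d V = (INF \<rho>\<in>V. log 2 (real d / real_of_int \<lfloor>1 / lambda_max \<rho>\<rfloor>))
       \<and> Cost d V = log 2 (real d) - (SUP \<rho>\<in>V. log 2 (real_of_int \<lfloor>2 powr Hmin \<rho>\<rfloor>))"
proof -
  obtain \<rho>0 where \<rho>0: "\<rho>0 \<in> V"
    and le: "\<And>\<rho>. \<rho> \<in> V \<Longrightarrow> \<lfloor>1 / lambda_max \<rho>\<rfloor> \<le> \<lfloor>1 / lambda_max \<rho>0\<rfloor>"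
    using floor_inv_lambda_max_maximiser[OF assms] by blast
  define N where "N \<rho> = real_of_int \<lfloor>1 / lambda_max \<rho>\<rfloor>" for \<rho>
  have dens: "density d \<rho>" if "\<rho> \<in> V" for \<rho> using assms(3) that unfolding Omega_def by auto
  have N_pos: "0 < N \<rho>" and log_le: "log 2 (N \<rho>) \<le> log 2 (N \<rho>0)"
    and log_div: "log 2 (real d / N \<rho>) = log 2 (real d) - log 2 (N \<rho>)"
    and Hmin: "real_of_int \<lfloor>2 powr Hmin \<rho>\<rfloor> = N \<rho>" if "\<rho> \<in> V" for \<rho>
  proof -
    show pos: "0 < N \<rho>"
      using floor_inv_lambda_max_bounds(1)[OF assms(1) dens[OF that]] unfolding N_def by simp
    have "N \<rho> \<le> N \<rho>0" using le[OF that] unfolding N_def by simp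
    then show "log 2 (N \<rho>) \<le> log 2 (N \<rho>0)" using pos by simp
    show "log 2 (real d / N \<rho>) = log 2 (real d) - log 2 (N \<rho>)"
      using pos assms(1) by (simp add: log_divide)
    show "real_of_int \<lfloor>2 powr Hmin \<rho>\<rfloor> = N \<rho>" unfolding N_def powr_Hmin[OF assms(1) dens[OF that]] ..
  qed
  have "(INF \<rho>\<in>V. log 2 (real d / N \<rho>)) = log 2 (real d) - log 2 (N \<rho>0)"
    using \<rho>0 log_le by (simp add: log_div cong: INF_cong) (rule cInf_eq_minimum, auto)
  moreover have "(SUP \<rho>\<in>V. log 2 (real_of_int \<lfloor>2 powr Hmin \<rho>\<rfloor>)) = log 2 (N \<rho>0)"
    using \<rho>0 log_le by (simp add: Hmin cong: SUP_cong) (rule cSup_eq_maximum, auto)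
  ultimately show ?thesis
    using Cost_eq_log_max_floor[OF assms(1,3) \<rho>0 le] unfolding N_def by simp
qed

end
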